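(* Let $\mathcal{M}_H$ be a tetrahedral mesh of a polyhedral domain $\Omega\subset\mathbb{R}^3$ and $\mathcal{M}_h$ its uniform refinement (each tetrahedron split into eight by the edge midpoints, as in the standard regular refinement). For a mesh $\mathcal{M}$ let $$W(\mathcal{M})=\{v\in C^0(\overline\Omega): v|_K\in \mathbb{P}_2(K)\oplus\operatorname{span}\{b_{F}: F \text{ a face of } K\}\ \forall K\in\mathcal{M}\},$$ where for a face $F$ of $K$ with barycentric coordinates $\lambda_i,\lambda_j,\lambda_k$ of $K$ nonzero on $F$, $b_F=\lambda_i\lambda_j\lambda_k$ is the cubic face bubble. Let $E_H:W(\mathcal{M}_H)\to W(\mathcal{M}_h)$ be nodal interpolation at the degrees of freedom of $W(\mathcal{M}_h)$ (point values at the vertices, the edge midpoints, and the face barycenters of $\mathcal{M}_h$). Then for every $u_H\in W(\mathcal{M}_H)$ and every face $F$ of $\mathcal{M}_H$, $$(E_H u_H)|_F=u_H|_F,$$ in particular $\int_F E_Hu_H\,\mathrm{d}s=\int_F u_H\,\mathrm{d}s$ for every coarse face $F$ (and the same holds componentwise for vector fields in $[W(\mathcal{M}_H)]^3$, so normal fluxes across coarse faces are preserved).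
   Context: The space $W(\mathcal{M})$ is the continuous piecewise quadratic space enriched with cubic face bubbles (denoted $\mathbb{P}_2\oplus B^F_3$). Note that $W(\mathcal{M}_H)\not\subset W(\mathcal{M}_h)$ in general. *)

theory Defs
  imports "HOL-Analysis.Analysis"
begin

type_synonym pt = "real^3"

definition tetra :: "pt set \<Rightarrow> bool" where
  "tetra K \<longleftrightarrow> card K = 4 \<and> \<not> affine_dependent K"

definition mesh :: "pt set set \<Rightarrow> pt set \<Rightarrow> bool" where
  "mesh M Omega \<longleftrightarrow> finite M \<and> M \<noteq> {} \<and> (\<forall>K\<in>M. tetra K) \<and>
     (\<forall>K\<in>M. \<forall>K'\<in>M. convex hull K \<inter> convex hull K' = convex hull (K \<inter> K')) \<and>
     open Omega \<and> connected Omega \<and> closure Omega = (\<Union>K\<in>M. convex hull K)"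

text \<open>Regular (red) refinement of the tetrahedron with vertices a b c d: four corner
  tetrahedra and the inner octahedron cut into four along the diagonal joining
  the midpoints of ac and bd.\<close>
definition red_children :: "pt \<Rightarrow> pt \<Rightarrow> pt \<Rightarrow> pt \<Rightarrow> pt set set" where
  "red_children a b c d =
    (let ab = midpoint a b; ac = midpoint a c; ad = midpoint a d;
         bc = midpoint b c; bd = midpoint b d; cd = midpoint c d
     in {{a, ab, ac, ad}, {b, ab, bc, bd}, {c, ac, bc, cd}, {d, ad, bd, cd},
         {ac, bd, ab, bc}, {ac, bd, bc, cd}, {ac, bd, cd, ad}, {ac, bd, ad, ab}})"

text \<open>Mh is the uniform refinement of MH: each coarse tetrahedron is replaced by its
  eight red children (for some labelling of its vertices, i.e. some choice of diagonal).\<close>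
definition uniform_refinement :: "pt set set \<Rightarrow> pt set set \<Rightarrow> bool" where
  "uniform_refinement Mh MH \<longleftrightarrow>
     (\<exists>ch. (\<forall>K\<in>MH. \<exists>a b c d. K = {a, b, c, d} \<and> ch K = red_children a b c d) \<and>
           Mh = (\<Union>K\<in>MH. ch K))"

definition bary :: "pt set \<Rightarrow> pt \<Rightarrow> pt \<Rightarrow> real" where
  "bary K v x = (THE l. (\<forall>w. w \<notin> K \<longrightarrow> l w = 0) \<and> (\<Sum>w\<in>K. l w) = 1 \<and>
                        (\<Sum>w\<in>K. l w *\<^sub>R w) = x) v"

definition poly2 :: "(pt \<Rightarrow> real) \<Rightarrow> bool" where
  "poly2 p \<longleftrightarrow> (\<exists>c (b::pt) (A::real^3^3). \<forall>x. p x = c + b \<bullet> x + x \<bullet> (A *v x))"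

definition face_bubble :: "pt set \<Rightarrow> pt \<Rightarrow> pt \<Rightarrow> real" where
  "face_bubble K v x = (\<Prod>w\<in>K - {v}. bary K w x)"

definition P2B3 :: "pt set \<Rightarrow> (pt \<Rightarrow> real) \<Rightarrow> bool" where
  "P2B3 K u \<longleftrightarrow> (\<exists>p d. poly2 p \<and>
      (\<forall>x\<in>convex hull K. u x = p x + (\<Sum>v\<in>K. d v * face_bubble K v x)))"

definition W :: "pt set set \<Rightarrow> (pt \<Rightarrow> real) \<Rightarrow> bool" where
  "W M u \<longleftrightarrow> continuous_on (\<Union>K\<in>M. convex hull K) u \<and> (\<forall>K\<in>M. P2B3 K u)"

definition dof_nodes :: "pt set set \<Rightarrow> pt set" where
  "dof_nodes M = (\<Union>K\<in>M. K \<union> {midpoint a b | a b. a \<in> K \<and> b \<in> K \<and> a \<noteq> b}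
      \<union> {(1/3) *\<^sub>R (a + b + c) | a b c. a \<in> K \<and> b \<in> K \<and> c \<in> K \<and> a \<noteq> b \<and> a \<noteq> c \<and> b \<noteq> c})"

definition faces :: "pt set set \<Rightarrow> pt set set" where
  "faces M = {K - {v} | K v. K \<in> M \<and> v \<in> K}"

end

theory Submission
  imports Defs
begin

text \<open>On a coarse face \<open>F\<close> every face bubble of the coarse tetrahedron except that of \<open>F\<close>
  vanishes, so \<open>u\<^sub>H\<close> restricted to \<open>F\<close> lies in \<open>P\<^sub>2 \<oplus> span {b\<^sub>F}\<close>. The red refinement cuts \<open>F\<close>
  into four triangles, each a face of a fine tetrahedron and each the image of \<open>F\<close> under a
  homothety of ratio \<open>\<plusminus>1/2\<close>; such a homothety maps the seven-dimensional space
  \<open>P\<^sub>2 \<oplus> bubble\<close> of a triangle onto that of its image, because it multiplies the cubic part of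
  the bubble by the cube of the ratio. So on every fine triangle both \<open>E\<^sub>H u\<^sub>H\<close> and \<open>u\<^sub>H\<close> lie in
  this space, and they agree at its seven unisolvent nodes (vertices, edge midpoints,
  barycentre), which are degrees of freedom of \<open>W(M\<^sub>h)\<close>.\<close>

section \<open>The children of a red refinement are tetrahedra\<close>

lemma affine_independent_if_subset_affine_hull:
  fixes K S :: "'a::euclidean_space set"
  assumes K: "\<not> affine_dependent K" and S: "finite S" "card S \<le> card K"
    and hull: "K \<subseteq> affine hull S"
  shows "\<not> affine_dependent S \<and> card S = card K"
proof -
  have "aff_dim K = int (card K) - 1"
    using K affine_independent_iff_card by blast
  moreover have "aff_dim K \<le> aff_dim S"
    using aff_dim_subset[OF hull] by simp
  moreover have "aff_dim S \<le> int (card S) - 1"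
    using aff_dim_le_card[OF S(1)] .
  ultimately have "card S = card K" "aff_dim S = int (card S) - 1"
    using S(2) by linarith+
  then show ?thesis
    using S(1) affine_independent_iff_card by blast
qed

lemma affine_hull_reflect_midpoint:
  assumes "x \<in> affine hull S" "midpoint x y \<in> affine hull S"
  shows "y \<in> affine hull S"
proof -
  have "(-1) *\<^sub>R x + 2 *\<^sub>R midpoint x y \<in> affine hull S"
    using assms by (intro mem_affine) auto
  then show ?thesis by (simp add: midpoint_def scaleR_add_right)
qed

lemma tetra_distinct:
  assumes "tetra {a, b, c, d}"
  shows "a \<noteq> b" "a \<noteq> c" "a \<noteq> d" "b \<noteq> c" "b \<noteq> d" "c \<noteq> d"
  using assms unfolding tetra_def by (auto simp: card_insert_if split: if_splits)

lemma tetra_if_subset_affine_hull: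
  assumes "tetra {a, b, c, d}" "{a, b, c, d} \<subseteq> affine hull {a', b', c', d'}"
  shows "tetra {a', b', c', d'}"
  using affine_independent_if_subset_affine_hull[of "{a, b, c, d}" "{a', b', c', d'}"] assms
  unfolding tetra_def by (simp add: card_insert_le_m1)

lemma tetra_corner_child:
  assumes "tetra {a, b, c, d}"
  shows "tetra {a, midpoint a b, midpoint a c, midpoint a d}"
proof (rule tetra_if_subset_affine_hull[OF assms])
  let ?S = "affine hull {a, midpoint a b, midpoint a c, midpoint a d}"
  have "a \<in> ?S" "midpoint a b \<in> ?S" "midpoint a c \<in> ?S" "midpoint a d \<in> ?S"
    by (simp_all add: hull_inc)
  then show "{a, b, c, d} \<subseteq> ?S"
    using affine_hull_reflect_midpoint by blast
qed

lemma tetra_inner_child: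
  assumes "tetra {a, b, c, d}"
  shows "tetra {midpoint a c, midpoint b d, midpoint a b, midpoint b c}"
proof (rule tetra_if_subset_affine_hull[OF assms])
  let ?S = "affine hull {midpoint a c, midpoint b d, midpoint a b, midpoint b c}"
  have ac: "midpoint a c \<in> ?S" and bd: "midpoint b d \<in> ?S"
    and ab: "midpoint a b \<in> ?S" and bc: "midpoint b c \<in> ?S"
    by (simp_all add: hull_inc)
  have "1 *\<^sub>R midpoint a b + 1 *\<^sub>R midpoint a c + (-1) *\<^sub>R midpoint b c \<in> ?S"
    using ab ac bc by (intro mem_affine_3) auto
  moreover have "1 *\<^sub>R midpoint a b + 1 *\<^sub>R midpoint a c + (-1) *\<^sub>R midpoint b c = a"
    by (simp add: midpoint_def vec_eq_iff field_simps)
  ultimately have a: "a \<in> ?S" by simp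
  have b: "b \<in> ?S" using affine_hull_reflect_midpoint[OF a ab] .
  have c: "c \<in> ?S" using affine_hull_reflect_midpoint[OF a ac] .
  have d: "d \<in> ?S" using affine_hull_reflect_midpoint[OF b bd] .
  show "{a, b, c, d} \<subseteq> ?S" using a b c d by blast
qed

lemma red_children_tetra:
  assumes "tetra {a, b, c, d}" "C \<in> red_children a b c d"
  shows "tetra C"
proof -
  have perm: "tetra {a', b', c', d'}" if "{a', b', c', d'} = {a, b, c, d}" for a' b' c' d'
    using assms(1) that by simp
  have "tetra {a, midpoint a b, midpoint a c, midpoint a d}"
    "tetra {b, midpoint a b, midpoint b c, midpoint b d}"
    "tetra {c, midpoint a c, midpoint b c, midpoint c d}"
    "tetra {d, midpoint a d, midpoint b d, midpoint c d}"
    using tetra_corner_child[OF perm[of a b c d]] tetra_corner_child[OF perm[of b a c d]]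
      tetra_corner_child[OF perm[of c a b d]] tetra_corner_child[OF perm[of d a b c]]
    by (auto simp: midpoint_sym insert_commute)
  moreover have "tetra {midpoint a c, midpoint b d, midpoint a b, midpoint b c}"
    "tetra {midpoint a c, midpoint b d, midpoint b c, midpoint c d}"
    "tetra {midpoint a c, midpoint b d, midpoint c d, midpoint a d}"
    "tetra {midpoint a c, midpoint b d, midpoint a d, midpoint a b}"
    using tetra_inner_child[OF perm[of a b c d]] tetra_inner_child[OF perm[of b c d a]]
      tetra_inner_child[OF perm[of c d a b]] tetra_inner_child[OF perm[of d a b c]]
    by (auto simp: midpoint_sym insert_commute)
  ultimately show ?thesis
    using assms(2) unfolding red_children_def Let_def by auto
qed

lemma red_children_rotate: "red_children b c d a = red_children a b c d"
  by (simp add: red_children_def Let_def midpoint_sym insert_commute)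

section \<open>Quadratics plus bubble on the reference triangle\<close>

definition tri_point :: "pt \<Rightarrow> pt \<Rightarrow> pt \<Rightarrow> real \<Rightarrow> real \<Rightarrow> pt" where
  "tri_point p q r s1 s2 = s1 *\<^sub>R p + s2 *\<^sub>R q + (1 - s1 - s2) *\<^sub>R r"

definition in_ref_triangle :: "real \<Rightarrow> real \<Rightarrow> bool" where
  "in_ref_triangle s1 s2 \<longleftrightarrow> 0 \<le> s1 \<and> 0 \<le> s2 \<and> s1 + s2 \<le> 1"

definition ref_bubble :: "real \<Rightarrow> real \<Rightarrow> real" where
  "ref_bubble s1 s2 = s1 * s2 * (1 - s1 - s2)"

definition quadratic2 :: "(real \<Rightarrow> real \<Rightarrow> real) \<Rightarrow> bool" where
  "quadratic2 f \<longleftrightarrow> (\<exists>k0 k1 k2 k3 k4 k5. \<forall>s1 s2.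
     f s1 s2 = k0 + k1 * s1 + k2 * s2 + k3 * s1 * s1 + k4 * s1 * s2 + k5 * s2 * s2)"

definition P2B3_ref :: "(real \<Rightarrow> real \<Rightarrow> real) \<Rightarrow> bool" where
  "P2B3_ref f \<longleftrightarrow> (\<exists>q c. quadratic2 q \<and>
     (\<forall>s1 s2. in_ref_triangle s1 s2 \<longrightarrow> f s1 s2 = q s1 s2 + c * ref_bubble s1 s2))"

definition ref_nodes :: "(real \<times> real) set" where
  "ref_nodes = {(1, 0), (0, 1), (0, 0), (1/2, 1/2), (1/2, 0), (0, 1/2), (1/3, 1/3)}"

lemma convex_hull_3_tri_point:
  "convex hull {p, q, r} = {tri_point p q r s1 s2 | s1 s2. in_ref_triangle s1 s2}"
proof (intro set_eqI iffI)
  fix x assume "x \<in> convex hull {p, q, r}"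
  then obtain u v w where "0 \<le> u" "0 \<le> v" "0 \<le> w" "u + v + w = 1"
    and x: "x = u *\<^sub>R p + v *\<^sub>R q + w *\<^sub>R r"
    unfolding convex_hull_3 by blast
  then have "in_ref_triangle u v" "x = tri_point p q r u v"
    by (simp_all add: in_ref_triangle_def tri_point_def flip: eq_diff_eq')
  then show "x \<in> {tri_point p q r s1 s2 | s1 s2. in_ref_triangle s1 s2}" by blast
next
  fix x assume "x \<in> {tri_point p q r s1 s2 | s1 s2. in_ref_triangle s1 s2}"
  then obtain s1 s2 where "in_ref_triangle s1 s2" "x = tri_point p q r s1 s2" by blast
  then show "x \<in> convex hull {p, q, r}"
    unfolding convex_hull_3 in_ref_triangle_def tri_point_def
    by (intro CollectI exI[of _ s1] exI[of _ s2] exI[of _ "1 - s1 - s2"]) simp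
qed

lemma tri_point_homothety:
  "tri_point p q r (a * s1 + c1) (a * s2 + c2) =
   tri_point (tri_point p q r (a + c1) c2) (tri_point p q r c1 (a + c2)) (tri_point p q r c1 c2) s1 s2"
  by (simp add: tri_point_def vec_eq_iff algebra_simps)

lemma tri_point_vertices [simp]:
  "tri_point p q r 1 0 = p" "tri_point p q r 0 1 = q" "tri_point p q r 0 0 = r"
  by (simp_all add: tri_point_def)

lemma tri_point_midpoints [simp]:
  "tri_point p q r (1/2) (1/2) = midpoint p q"
  "tri_point p q r (1/2) 0 = midpoint p r"
  "tri_point p q r 0 (1/2) = midpoint q r"
  by (simp_all add: tri_point_def midpoint_def vec_eq_iff)

lemma tri_point_barycenter: "tri_point p q r (1/3) (1/3) = (1/3) *\<^sub>R (p + q + r)"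
  by (simp add: tri_point_def vec_eq_iff)

lemma quadratic2_add:
  assumes "quadratic2 f" "quadratic2 g"
  shows "quadratic2 (\<lambda>s1 s2. f s1 s2 + g s1 s2)"
proof -
  obtain k0 k1 k2 k3 k4 k5 where f: "\<And>s1 s2.
      f s1 s2 = k0 + k1 * s1 + k2 * s2 + k3 * s1 * s1 + k4 * s1 * s2 + k5 * s2 * s2"
    using assms(1) unfolding quadratic2_def by blast
  obtain m0 m1 m2 m3 m4 m5 where g: "\<And>s1 s2.
      g s1 s2 = m0 + m1 * s1 + m2 * s2 + m3 * s1 * s1 + m4 * s1 * s2 + m5 * s2 * s2"
    using assms(2) unfolding quadratic2_def by blast
  have "\<forall>s1 s2. f s1 s2 + g s1 s2 = (k0 + m0) + (k1 + m1) * s1 + (k2 + m2) * s2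
      + (k3 + m3) * s1 * s1 + (k4 + m4) * s1 * s2 + (k5 + m5) * s2 * s2"
    by (simp add: f g algebra_simps)
  then show ?thesis
    unfolding quadratic2_def by blast
qed

lemma quadratic2_scale:
  assumes "quadratic2 f"
  shows "quadratic2 (\<lambda>s1 s2. c * f s1 s2)"
proof -
  obtain k0 k1 k2 k3 k4 k5 where f: "\<And>s1 s2.
      f s1 s2 = k0 + k1 * s1 + k2 * s2 + k3 * s1 * s1 + k4 * s1 * s2 + k5 * s2 * s2"
    using assms unfolding quadratic2_def by blast
  have "\<forall>s1 s2. c * f s1 s2 = c * k0 + c * k1 * s1 + c * k2 * s2
      + c * k3 * s1 * s1 + c * k4 * s1 * s2 + c * k5 * s2 * s2"
    by (simp add: f algebra_simps)
  then show ?thesis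
    unfolding quadratic2_def by blast
qed

lemma quadratic2_homothety:
  assumes "quadratic2 f"
  shows "quadratic2 (\<lambda>s1 s2. f (a * s1 + c1) (a * s2 + c2))"
proof -
  obtain k0 k1 k2 k3 k4 k5 where f: "\<And>s1 s2.
      f s1 s2 = k0 + k1 * s1 + k2 * s2 + k3 * s1 * s1 + k4 * s1 * s2 + k5 * s2 * s2"
    using assms unfolding quadratic2_def by blast
  have "\<forall>s1 s2. f (a * s1 + c1) (a * s2 + c2) = f c1 c2
      + a * (k1 + 2 * k3 * c1 + k4 * c2) * s1 + a * (k2 + k4 * c1 + 2 * k5 * c2) * s2
      + a * a * k3 * s1 * s1 + a * a * k4 * s1 * s2 + a * a * k5 * s2 * s2"
    by (simp add: f algebra_simps)
  then show ?thesis
    unfolding quadratic2_def by blast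
qed

lemma quadratic2_bubble_homothety:
  "quadratic2 (\<lambda>s1 s2. ref_bubble (a * s1 + c1) (a * s2 + c2) - a ^ 3 * ref_bubble s1 s2)"
proof -
  have "\<forall>s1 s2. ref_bubble (a * s1 + c1) (a * s2 + c2) - a ^ 3 * ref_bubble s1 s2 =
      (1 - c1 - c2) * c1 * c2 + (a * c2 * (1 - c1 - c2) - a * c1 * c2) * s1
      + (a * c1 * (1 - c1 - c2) - a * c1 * c2) * s2 + (- a * a * c2) * s1 * s1
      + (a * a * (1 - c1 - c2) - a * a * (c1 + c2) - a ^ 3) * s1 * s2 + (- a * a * c1) * s2 * s2"
    by (simp add: ref_bubble_def algebra_simps power3_eq_cube)
  then show ?thesis
    unfolding quadratic2_def by blast
qed

lemma P2B3_ref_homothety: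
  assumes f: "P2B3_ref f"
    and into: "\<And>s1 s2. in_ref_triangle s1 s2 \<Longrightarrow> in_ref_triangle (a * s1 + c1) (a * s2 + c2)"
  shows "P2B3_ref (\<lambda>s1 s2. f (a * s1 + c1) (a * s2 + c2))"
proof -
  obtain q c where q: "quadratic2 q"
    and rep: "\<And>s1 s2. in_ref_triangle s1 s2 \<Longrightarrow> f s1 s2 = q s1 s2 + c * ref_bubble s1 s2"
    using f unfolding P2B3_ref_def by blast
  let ?q = "\<lambda>s1 s2. q (a * s1 + c1) (a * s2 + c2)
    + c * (ref_bubble (a * s1 + c1) (a * s2 + c2) - a ^ 3 * ref_bubble s1 s2)"
  have "quadratic2 ?q"
    using quadratic2_add[OF quadratic2_homothety[OF q] quadratic2_scale[OF quadratic2_bubble_homothety]] .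
  moreover have "f (a * s1 + c1) (a * s2 + c2) = ?q s1 s2 + (c * a ^ 3) * ref_bubble s1 s2"
    if "in_ref_triangle s1 s2" for s1 s2
    using rep[OF into[OF that]] by (simp add: algebra_simps)
  ultimately show ?thesis
    unfolding P2B3_ref_def by blast
qed

lemma P2B3_ref_diff:
  assumes "P2B3_ref f" "P2B3_ref g"
  shows "P2B3_ref (\<lambda>s1 s2. f s1 s2 - g s1 s2)"
proof -
  obtain q c where q: "quadratic2 q"
    and f: "\<And>s1 s2. in_ref_triangle s1 s2 \<Longrightarrow> f s1 s2 = q s1 s2 + c * ref_bubble s1 s2"
    using assms(1) unfolding P2B3_ref_def by blast
  obtain q' c' where q': "quadratic2 q'"
    and g: "\<And>s1 s2. in_ref_triangle s1 s2 \<Longrightarrow> g s1 s2 = q' s1 s2 + c' * ref_bubble s1 s2"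
    using assms(2) unfolding P2B3_ref_def by blast
  have "quadratic2 (\<lambda>s1 s2. q s1 s2 + -1 * q' s1 s2)"
    using quadratic2_add[OF q quadratic2_scale[OF q']] .
  moreover have "f s1 s2 - g s1 s2 = (q s1 s2 + -1 * q' s1 s2) + (c - c') * ref_bubble s1 s2"
    if "in_ref_triangle s1 s2" for s1 s2
    using f[OF that] g[OF that] by (simp add: algebra_simps)
  ultimately show ?thesis
    unfolding P2B3_ref_def by blast
qed

lemma P2B3_ref_eq_zero:
  assumes h: "P2B3_ref h" and nodes: "\<forall>(s1, s2)\<in>ref_nodes. h s1 s2 = 0"
    and s: "in_ref_triangle s1 s2"
  shows "h s1 s2 = 0"
proof -
  obtain q c where q: "quadratic2 q"
    and rep: "\<And>s1 s2. in_ref_triangle s1 s2 \<Longrightarrow> h s1 s2 = q s1 s2 + c * ref_bubble s1 s2"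
    using h unfolding P2B3_ref_def by blast
  obtain k0 k1 k2 k3 k4 k5 where k: "\<And>s1 s2.
      q s1 s2 = k0 + k1 * s1 + k2 * s2 + k3 * s1 * s1 + k4 * s1 * s2 + k5 * s2 * s2"
    using q unfolding quadratic2_def by blast
  have H: "h s1 s2 = k0 + k1 * s1 + k2 * s2 + k3 * s1 * s1 + k4 * s1 * s2 + k5 * s2 * s2
      + c * (s1 * s2 * (1 - s1 - s2))" if "in_ref_triangle s1 s2" for s1 s2
    using rep[OF that] k by (simp add: ref_bubble_def)
  have "h 1 0 = 0" "h 0 1 = 0" "h 0 0 = 0" "h (1/2) (1/2) = 0" "h (1/2) 0 = 0" "h 0 (1/2) = 0"
    "h (1/3) (1/3) = 0"
    using nodes unfolding ref_nodes_def by auto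
  then have "k0 + k1 + k3 = 0" "k0 + k2 + k5 = 0" "k0 = 0"
    "k0 + k1/2 + k2/2 + k3/4 + k4/4 + k5/4 = 0" "k0 + k1/2 + k3/4 = 0" "k0 + k2/2 + k5/4 = 0"
    "k0 + k1/3 + k2/3 + k3/9 + k4/9 + k5/9 + c/27 = 0"
    by (simp_all add: H in_ref_triangle_def)
  then have "k0 = 0" "k1 = 0" "k2 = 0" "k3 = 0" "k4 = 0" "k5 = 0" "c = 0"
    by linarith+
  then show ?thesis
    using H[OF s] by simp
qed

lemma P2B3_ref_unisolvent:
  assumes "P2B3_ref f" "P2B3_ref g" "\<forall>(s1, s2)\<in>ref_nodes. f s1 s2 = g s1 s2"
    and "in_ref_triangle s1 s2"
  shows "f s1 s2 = g s1 s2"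
  using P2B3_ref_eq_zero[OF P2B3_ref_diff[OF assms(1,2)]] assms(3,4) by auto

section \<open>Traces on faces and agreement on fine faces\<close>

lemma quadratic2_poly2_trace:
  assumes "poly2 P"
  shows "quadratic2 (\<lambda>s1 s2. P (tri_point p q r s1 s2))"
proof -
  obtain c b A where P: "\<And>x. P x = c + b \<bullet> x + x \<bullet> (A *v x)"
    using assms unfolding poly2_def by blast
  define e1 e2 where "e1 = p - r" and "e2 = q - r"
  have "tri_point p q r s1 s2 = r + s1 *\<^sub>R e1 + s2 *\<^sub>R e2" for s1 s2
    by (simp add: tri_point_def e1_def e2_def algebra_simps)
  then have "\<forall>s1 s2. P (tri_point p q r s1 s2) = P r
      + (b \<bullet> e1 + r \<bullet> (A *v e1) + e1 \<bullet> (A *v r)) * s1 + (b \<bullet> e2 + r \<bullet> (A *v e2) + e2 \<bullet> (A *v r)) * s2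
      + (e1 \<bullet> (A *v e1)) * s1 * s1 + (e1 \<bullet> (A *v e2) + e2 \<bullet> (A *v e1)) * s1 * s2
      + (e2 \<bullet> (A *v e2)) * s2 * s2"
    by (simp add: P algebra_simps inner_add_left inner_add_right)
  then show ?thesis
    unfolding quadratic2_def by blast
qed

lemma bary_eqI:
  assumes fin: "finite K" and indep: "\<not> affine_dependent K"
    and l: "\<forall>w. w \<notin> K \<longrightarrow> l w = 0" "sum l K = 1" "(\<Sum>w\<in>K. l w *\<^sub>R w) = x"
  shows "bary K v x = l v"
proof -
  have "(THE l. (\<forall>w. w \<notin> K \<longrightarrow> l w = 0) \<and> sum l K = 1 \<and> (\<Sum>w\<in>K. l w *\<^sub>R w) = x) = l"
  proof (rule the_equality)
    fix l' assume l': "(\<forall>w. w \<notin> K \<longrightarrow> l' w = 0) \<and> sum l' K = 1 \<and> (\<Sum>w\<in>K. l' w *\<^sub>R w) = x"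
    have "sum (\<lambda>w. l' w - l w) K = 0" "(\<Sum>w\<in>K. (l' w - l w) *\<^sub>R w) = 0"
      using l l' by (simp_all add: sum_subtractf scaleR_diff_left)
    then have "\<forall>w\<in>K. l' w - l w = 0"
      using indep affine_dependent_explicit_finite[OF fin] by blast
    then show "l' = l"
      using l l' by fastforce
  qed (use l in blast)
  then show ?thesis
    unfolding bary_def by simp
qed

lemma face_bubble_sum_on_face:
  assumes K: "tetra {p, q, r, w}"
  shows "(\<Sum>v\<in>{p, q, r, w}. d v * face_bubble {p, q, r, w} v (tri_point p q r s1 s2))
    = d w * ref_bubble s1 s2"
proof -
  let ?K = "{p, q, r, w}" and ?x = "tri_point p q r s1 s2"
  note dist = tetra_distinct[OF K]
  define l where "l z = (if z = p then s1 else if z = q then s2 else if z = r then 1 - s1 - s2 else 0)" for z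
  have "bary ?K z ?x = l z" for z
    using K dist by (intro bary_eqI) (auto simp: tetra_def l_def tri_point_def)
  then show ?thesis
    using dist by (simp add: face_bubble_def l_def ref_bubble_def insert_Diff_if mult.assoc)
qed

lemma P2B3_ref_face_trace:
  assumes K: "tetra {p, q, r, w}" and u: "P2B3 {p, q, r, w} u"
  shows "P2B3_ref (\<lambda>s1 s2. u (tri_point p q r s1 s2))"
proof -
  obtain P d where P: "poly2 P" and rep: "\<forall>x\<in>convex hull {p, q, r, w}.
      u x = P x + (\<Sum>v\<in>{p, q, r, w}. d v * face_bubble {p, q, r, w} v x)"
    using u unfolding P2B3_def by blast
  have "u (tri_point p q r s1 s2) = P (tri_point p q r s1 s2) + d w * ref_bubble s1 s2"
    if "in_ref_triangle s1 s2" for s1 s2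
  proof -
    have "tri_point p q r s1 s2 \<in> convex hull {p, q, r}"
      using that by (auto simp: convex_hull_3_tri_point)
    also have "\<dots> \<subseteq> convex hull {p, q, r, w}"
      by (rule hull_mono) auto
    finally show ?thesis
      using rep face_bubble_sum_on_face[OF K] by simp
  qed
  then show ?thesis
    using quadratic2_poly2_trace[OF P] unfolding P2B3_ref_def by blast
qed

lemma vertex_in_dof_nodes: "K \<in> M \<Longrightarrow> a \<in> K \<Longrightarrow> a \<in> dof_nodes M"
  unfolding dof_nodes_def by blast

lemma midpoint_in_dof_nodes:
  "K \<in> M \<Longrightarrow> a \<in> K \<Longrightarrow> b \<in> K \<Longrightarrow> a \<noteq> b \<Longrightarrow> midpoint a b \<in> dof_nodes M"
  unfolding dof_nodes_def by (rule UN_I, assumption, rule UnI1, rule UnI2) blast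

lemma barycenter_in_dof_nodes:
  "K \<in> M \<Longrightarrow> a \<in> K \<Longrightarrow> b \<in> K \<Longrightarrow> c \<in> K \<Longrightarrow> a \<noteq> b \<Longrightarrow> a \<noteq> c \<Longrightarrow> b \<noteq> c
    \<Longrightarrow> (1/3) *\<^sub>R (a + b + c) \<in> dof_nodes M"
  unfolding dof_nodes_def by (rule UN_I, assumption, rule UnI2) blast

lemma tri_point_ref_nodes_in_dof_nodes:
  assumes C: "{p, q, r, w} \<in> M" "tetra {p, q, r, w}"
  shows "\<forall>(s1, s2)\<in>ref_nodes. tri_point p q r s1 s2 \<in> dof_nodes M"
  using tetra_distinct[OF C(2)]
    vertex_in_dof_nodes[OF C(1)] midpoint_in_dof_nodes[OF C(1)] barycenter_in_dof_nodes[OF C(1)]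
  by (simp add: ref_nodes_def tri_point_barycenter)

lemma interpolant_eq_on_fine_face:
  assumes C: "{p, q, r, w} \<in> M" "tetra {p, q, r, w}"
    and E: "W M E" and dof: "\<forall>z\<in>dof_nodes M. E z = u z"
    and u: "P2B3_ref (\<lambda>s1 s2. u (tri_point p q r s1 s2))" and s: "in_ref_triangle s1 s2"
  shows "E (tri_point p q r s1 s2) = u (tri_point p q r s1 s2)"
proof (rule P2B3_ref_unisolvent[OF _ u _ s])
  show "P2B3_ref (\<lambda>s1 s2. E (tri_point p q r s1 s2))"
    using P2B3_ref_face_trace[OF C(2)] C(1) E unfolding W_def by blast
  show "\<forall>(s1, s2)\<in>ref_nodes. E (tri_point p q r s1 s2) = u (tri_point p q r s1 s2)"
    using dof tri_point_ref_nodes_in_dof_nodes[OF C] by blast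
qed

section \<open>Agreement on coarse faces\<close>

text \<open>The red refinement cuts the reference triangle into its images under the maps
  \<open>(s1, s2) \<mapsto> (h * s1 + c1, h * s2 + c2)\<close> for \<open>(h, c1, c2)\<close> below: three corners of ratio
  \<open>1/2\<close> and the middle triangle of ratio \<open>-1/2\<close>.\<close>
definition red_homotheties :: "(real \<times> real \<times> real) set" where
  "red_homotheties = {(1/2, 1/2, 0), (1/2, 0, 1/2), (1/2, 0, 0), (-1/2, 1/2, 1/2)}"

lemma red_homotheties_in_ref_triangle:
  "\<forall>(h, c1, c2)\<in>red_homotheties. \<forall>s1 s2.
    in_ref_triangle s1 s2 \<longrightarrow> in_ref_triangle (h * s1 + c1) (h * s2 + c2)"
  unfolding red_homotheties_def in_ref_triangle_def by auto

lemma red_homotheties_cover: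
  assumes "in_ref_triangle s1 s2"
  obtains h c1 c2 \<sigma>1 \<sigma>2 where "(h, c1, c2) \<in> red_homotheties" "in_ref_triangle \<sigma>1 \<sigma>2"
    "s1 = h * \<sigma>1 + c1" "s2 = h * \<sigma>2 + c2"
proof -
  consider "1/2 \<le> s1" | "1/2 \<le> s2" | "s1 + s2 \<le> 1/2" | "s1 \<le> 1/2" "s2 \<le> 1/2" "1/2 \<le> s1 + s2"
    by linarith
  then show ?thesis
  proof cases
    case 1
    show ?thesis
      by (rule that[of "1/2" "1/2" 0 "2 * s1 - 1" "2 * s2"])
        (use 1 assms in \<open>auto simp: red_homotheties_def in_ref_triangle_def field_simps\<close>)
  next
    case 2
    show ?thesis
      by (rule that[of "1/2" 0 "1/2" "2 * s1" "2 * s2 - 1"])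
        (use 2 assms in \<open>auto simp: red_homotheties_def in_ref_triangle_def field_simps\<close>)
  next
    case 3
    show ?thesis
      by (rule that[of "1/2" 0 0 "2 * s1" "2 * s2"])
        (use 3 assms in \<open>auto simp: red_homotheties_def in_ref_triangle_def field_simps\<close>)
  next
    case 4
    show ?thesis
      by (rule that[of "-1/2" "1/2" "1/2" "1 - 2 * s1" "1 - 2 * s2"])
        (use 4 assms in \<open>auto simp: red_homotheties_def in_ref_triangle_def field_simps\<close>)
  qed
qed

lemma red_children_contain_face_subtriangles:
  "\<forall>(h, c1, c2)\<in>red_homotheties. \<exists>w.
    {tri_point b c d (h + c1) c2, tri_point b c d c1 (h + c2), tri_point b c d c1 c2, w}
      \<in> red_children a b c d"
proof -
  have "{b, midpoint b c, midpoint b d, midpoint a b} \<in> red_children a b c d"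
    "{midpoint b c, c, midpoint c d, midpoint a c} \<in> red_children a b c d"
    "{midpoint b d, midpoint c d, d, midpoint a d} \<in> red_children a b c d"
    "{midpoint c d, midpoint b d, midpoint b c, midpoint a c} \<in> red_children a b c d"
    by (auto simp: red_children_def Let_def midpoint_sym insert_commute)
  then show ?thesis
    unfolding red_homotheties_def by auto
qed

lemma interpolant_eq_on_opposite_face:
  assumes K: "tetra {a, b, c, d}" and u: "P2B3 {a, b, c, d} u"
    and M: "red_children a b c d \<subseteq> M" and E: "W M E" and dof: "\<forall>z\<in>dof_nodes M. E z = u z"
  shows "\<forall>x\<in>convex hull {b, c, d}. E x = u x"
proof
  fix x assume "x \<in> convex hull {b, c, d}"
  then obtain s1 s2 where s: "in_ref_triangle s1 s2" and x: "x = tri_point b c d s1 s2"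
    by (auto simp: convex_hull_3_tri_point)
  obtain h c1 c2 \<sigma>1 \<sigma>2 where hc: "(h, c1, c2) \<in> red_homotheties" and \<sigma>: "in_ref_triangle \<sigma>1 \<sigma>2"
    and s12: "s1 = h * \<sigma>1 + c1" "s2 = h * \<sigma>2 + c2"
    using red_homotheties_cover[OF s] .
  obtain w where C: "{tri_point b c d (h + c1) c2, tri_point b c d c1 (h + c2), tri_point b c d c1 c2, w}
      \<in> red_children a b c d"
    using red_children_contain_face_subtriangles hc by blast
  have "P2B3_ref (\<lambda>s1 s2. u (tri_point b c d s1 s2))"
    using P2B3_ref_face_trace[of b c d a u] K u by (simp add: insert_commute)
  then have "P2B3_ref (\<lambda>\<sigma>1 \<sigma>2. u (tri_point b c d (h * \<sigma>1 + c1) (h * \<sigma>2 + c2)))"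
    using P2B3_ref_homothety red_homotheties_in_ref_triangle hc by blast
  moreover have "{tri_point b c d (h + c1) c2, tri_point b c d c1 (h + c2), tri_point b c d c1 c2, w} \<in> M"
    using C M by blast
  ultimately show "E x = u x"
    unfolding x s12 tri_point_homothety
    using interpolant_eq_on_fine_face[OF _ red_children_tetra[OF K C] E dof _ \<sigma>] by blast
qed

lemma interpolant_eq_on_tetra_faces:
  assumes K: "tetra {a, b, c, d}" and u: "P2B3 {a, b, c, d} u"
    and M: "red_children a b c d \<subseteq> M" and E: "W M E" and dof: "\<forall>z\<in>dof_nodes M. E z = u z"
    and v: "v \<in> {a, b, c, d}"
  shows "\<forall>x\<in>convex hull ({a, b, c, d} - {v}). E x = u x"
proof -
  note dist = tetra_distinct[OF K]
  have rotate: "{b, c, d, a} = {a, b, c, d}" by auto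
  have "\<forall>x\<in>convex hull {b, c, d}. E x = u x"
    using interpolant_eq_on_opposite_face[OF K u M E dof] .
  moreover have "\<forall>x\<in>convex hull {c, d, a}. E x = u x"
    using interpolant_eq_on_opposite_face[of b c d a] K u M E dof
    by (simp add: rotate red_children_rotate)
  moreover have "\<forall>x\<in>convex hull {d, a, b}. E x = u x"
    using interpolant_eq_on_opposite_face[of c d a b] K u M E dof
    by (simp add: insert_commute red_children_rotate)
  moreover have "\<forall>x\<in>convex hull {a, b, c}. E x = u x"
    using interpolant_eq_on_opposite_face[of d a b c] K u M E dof
    by (simp add: insert_commute red_children_rotate)
  moreover have "{a, b, c, d} - {v} = {b, c, d} \<or> {a, b, c, d} - {v} = {c, d, a}
      \<or> {a, b, c, d} - {v} = {d, a, b} \<or> {a, b, c, d} - {v} = {a, b, c}"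
    using v dist by auto
  ultimately show ?thesis
    by (elim disjE) simp_all
qed

theorem mainTheorem3:
  fixes Omega :: "pt set" and MH Mh :: "pt set set" and uH EuH :: "pt \<Rightarrow> real"
  assumes "mesh MH Omega"
    and "uniform_refinement Mh MH"
    and "W MH uH"
    and "W Mh EuH"
    and "\<forall>z\<in>dof_nodes Mh. EuH z = uH z"
  shows "\<forall>F\<in>faces MH. \<forall>x\<in>convex hull F. EuH x = uH x"
proof
  fix F assume "F \<in> faces MH"
  then obtain K v where K: "K \<in> MH" and v: "v \<in> K" and F: "F = K - {v}"
    unfolding faces_def by blast
  obtain ch where ch: "\<forall>K\<in>MH. \<exists>a b c d. K = {a, b, c, d} \<and> ch K = red_children a b c d"
    and Mh: "Mh = (\<Union>K\<in>MH. ch K)"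
    using assms(2) unfolding uniform_refinement_def by blast
  obtain a b c d where abcd: "K = {a, b, c, d}" and chK: "ch K = red_children a b c d"
    using bspec[OF ch K] by blast
  have "tetra {a, b, c, d}"
    using assms(1) K abcd unfolding mesh_def by blast
  moreover have "P2B3 {a, b, c, d} uH"
    using assms(3) K abcd unfolding W_def by blast
  moreover have "red_children a b c d \<subseteq> Mh"
    using K chK Mh by blast
  ultimately show "\<forall>x\<in>convex hull F. EuH x = uH x"
    using interpolant_eq_on_tetra_faces assms(4,5) v F abcd by blast
qed

end
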